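(* (a) For $n\ge 0$: $a(n)=a(n+1)$ if and only if $n\in\{\lfloor \varphi^2 k\rfloor-1 : k\ge 1\}$. (b) For $n\ge 0$: $a(n)\ne a(n+1)$ if and only if $n\in\{\lfloor \varphi k+1/\varphi\rfloor : k\ge 0\}$. (c) For $n\ge 1$: $a(n)\notin\{a(n-1),a(n+1)\}$ if and only if $n\in\{\lfloor \varphi\lfloor \varphi^2 k\rfloor\rfloor : k\ge 1\}$.
   Context: $\varphi=(1+\sqrt5)/2$. Let $(F_n)_{n\ge 0}$ be the Fibonacci numbers: $F_0=0$, $F_1=1$, $F_n=F_{n-1}+F_{n-2}$ for $n\ge 2$. Define $(a(n))_{n\ge 0}$ (OEIS A105774) by $a(0)=0$, $a(1)=1$, and for $n\ge 2$, $a(n)=F_{j+1}-a(n-F_j)$, where $j\ge 2$ is the unique index with $F_j<n\le F_{j+1}$. *)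

theory Defs
  imports Complex_Main "HOL-Number_Theory.Fib"
begin

definition phi :: real where "phi = (1 + sqrt 5) / 2"

definition fibidx :: "nat \<Rightarrow> nat" where
  "fibidx n = (THE j. 2 \<le> j \<and> fib j < n \<and> n \<le> fib (j + 1))"

lemma fib_ge_self: "n \<le> fib (n + 1)"
proof (induction n rule: nat_less_induct)
  case (1 n)
  show ?case
  proof (cases "n < 2")
    case True then show ?thesis by (cases n) auto
  next
    case False
    then obtain m where m: "n = m + 2" by (metis add.commute le_Suc_ex not_less)
    have "m + 1 \<le> fib (m + 2)" proof -
      have "m + 1 < n" using m by simp
      then have "m + 1 \<le> fib (m + 1 + 1)" using 1 by blast
      then show ?thesis by (simp add: add.assoc)
    qed
    moreover have "1 \<le> fib (m + 1)" using fib_neq_0_nat by (simp add: Suc_leI)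
    ultimately show ?thesis using m fib_plus_2[of "m+1"] by simp
  qed
qed

lemma fibidx_exists:
  assumes "2 \<le> n" shows "\<exists>j. 2 \<le> j \<and> fib j < n \<and> n \<le> fib (j + 1)"
proof -
  define k where "k = (LEAST k. n \<le> fib (k + 1))"
  have hk: "n \<le> fib (k + 1)" unfolding k_def by (rule LeastI[of _ n]) (rule fib_ge_self)
  have lt: "\<And>i. i < k \<Longrightarrow> fib (i + 1) < n" unfolding k_def using not_less_Least by fastforce
  have "k \<ge> 2"
  proof (rule ccontr)
    assume "\<not> 2 \<le> k"
    then have "k \<le> 1" by simp
    then have "fib (k+1) \<le> 1" by (cases k) auto
    then show False using hk assms by simp
  qed
  then obtain i where i: "k = i + 1" by (metis add.commute le_Suc_ex one_add_one add.assoc)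
  have "fib k < n" using lt[of i] i by simp
  then show ?thesis using hk \<open>k \<ge> 2\<close> by blast
qed

lemma fibidx_unique:
  assumes "2 \<le> i" "fib i < n" "n \<le> fib (i + 1)" "2 \<le> j" "fib j < n" "n \<le> fib (j + 1)"
  shows "i = j"
proof (rule ccontr)
  assume "i \<noteq> j"
  then consider "i + 1 \<le> j" | "j + 1 \<le> i" by linarith
  then show False
  proof cases
    case 1 then have "fib (i+1) \<le> fib j" by (rule fib_mono) then show False using assms by simp
  next
    case 2 then have "fib (j+1) \<le> fib i" by (rule fib_mono) then show False using assms by simp
  qed
qed

lemma fibidx_spec:
  assumes "2 \<le> n"
  shows "2 \<le> fibidx n \<and> fib (fibidx n) < n \<and> n \<le> fib (fibidx n + 1)"
proof -
  obtain j where j: "2 \<le> j \<and> fib j < n \<and> n \<le> fib (j + 1)" using fibidx_exists[OF assms] by blast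
  have "fibidx n = j" unfolding fibidx_def
    by (rule the_equality) (use j fibidx_unique in blast)+
  then show ?thesis using j by simp
qed

text \<open>OEIS A105774.\<close>
function a :: "nat \<Rightarrow> int" where
  "a n = (if n = 0 then 0 else if n = 1 then 1
          else int (fib (fibidx n + 1)) - a (n - fib (fibidx n)))"
  by auto
termination
proof (relation "measure id")
  fix n :: nat assume "\<not> n = 0" "\<not> n = 1"
  then have "2 \<le> n" by simp
  from fibidx_spec[OF this] have "fib (fibidx n) > 0" using fib_neq_0_nat by simp
  then show "(n - fib (fibidx n), n) \<in> measure id" using \<open>2 \<le> n\<close> by simp
qed simp

end

theory Submission
  imports Defs
begin

text \<open>Write \<open>\<theta>(n) = frac (n\<phi>)\<close>. By induction along the defining recursion, \<open>a(n) = a(n+1)\<close>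
  exactly when \<open>\<theta>(n+1) < 2 - \<phi> = \<phi>\<^sup>-\<^sup>2\<close>. For \<open>F\<^sub>j < n < F\<^sub>j\<^sub>+\<^sub>1\<close> both conditions are unchanged
  when \<open>n\<close> is replaced by \<open>n - F\<^sub>j\<close>: for \<open>a\<close> this is the recursion itself, for \<open>\<theta>\<close> it holds because
  the shift \<open>F\<^sub>j\<phi> - F\<^sub>j\<^sub>+\<^sub>1 = \<plusminus>\<phi>\<^sup>-\<^sup>j\<close> is smaller than the distance of the relevant multiples of \<open>\<phi>\<close>
  to the integers, by the best approximation property of the Fibonacci convergents. At
  \<open>n = F\<^sub>j\<^sub>+\<^sub>1\<close> both conditions fail.

  The conditions \<open>\<theta>(x) < 2 - \<phi>\<close> and \<open>\<theta>(x) > 2 - \<phi>\<close> characterise the complementary Beatty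
  sequences \<open>\<lfloor>\<phi>\<^sup>2k\<rfloor>\<close> and \<open>\<lfloor>\<phi>k\<rfloor>\<close>, which gives (a) and (b). Finally \<open>a(n)\<close> differs from both
  neighbours iff \<open>\<theta>(n) > 4 - 2\<phi>\<close>, and as \<open>\<theta>(\<lfloor>m\<phi>\<rfloor>) = 1 - \<theta>(m)/\<phi>\<close> this means \<open>n = \<lfloor>m\<phi>\<rfloor>\<close>
  with \<open>\<theta>(m) < 2 - \<phi>\<close>, i.e. with \<open>m\<close> of the form \<open>\<lfloor>\<phi>\<^sup>2k\<rfloor>\<close>.\<close>

section \<open>The golden ratio\<close>

lemma phi_squared: "phi\<^sup>2 = phi + 1"
  unfolding phi_def by (simp add: power2_eq_square field_simps)

lemma phi_bounds: "1.618 < phi" "phi < 1.6181"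
proof -
  have "2.236 < sqrt 5" by (rule real_less_rsqrt) (simp add: power2_eq_square)
  moreover have "sqrt 5 < sqrt (2.2362\<^sup>2)" by (subst real_sqrt_less_iff) (simp add: power2_eq_square)
  then have "sqrt 5 < 2.2362" by simp
  ultimately show "1.618 < phi" "phi < 1.6181" unfolding phi_def by auto
qed

lemma phi_mult_phi_mult: "phi * (phi * r) = r + phi * r"
proof -
  have "phi * (phi * r) = phi\<^sup>2 * r" by (simp add: power2_eq_square)
  then show ?thesis by (simp add: phi_squared algebra_simps)
qed

lemma phi_times_phi_minus_1: "phi * (phi - 1) = 1"
  using phi_squared by (simp add: power2_eq_square algebra_simps)

lemma phi_plus_1_times_2_minus_phi: "(phi + 1) * (2 - phi) = 1"
  using phi_squared by (simp add: power2_eq_square algebra_simps)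

lemma phi_minus_1_cube: "(phi - 1) ^ 3 = 2 * phi - 3"
proof -
  have "(phi - 1) ^ 3 = (phi - 1) * (phi * phi) - 2 * (phi - 1) * phi + (phi - 1)"
    by (simp add: power3_eq_cube algebra_simps)
  then show ?thesis using phi_squared by (simp add: power2_eq_square algebra_simps)
qed

section \<open>Fibonacci approximations of the golden ratio\<close>

lemma fib_Suc_eq_add_fib_pred: "1 \<le> j \<Longrightarrow> fib (j + 1) = fib j + fib (j - 1)"
  by (cases j) auto

lemma fib_times_phi_minus_fib_Suc: "real (fib k) * phi - real (fib (Suc k)) = - ((1 - phi) ^ k)"
proof (induction k rule: fib.induct)
  case 1 then show ?case by simp
next
  case 2 then show ?case unfolding phi_def by simp
next
  case (3 n)
  have "real (fib (Suc (Suc n))) * phi - real (fib (Suc (Suc (Suc n))))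
     = (real (fib (Suc n)) * phi - real (fib (Suc (Suc n)))) + (real (fib n) * phi - real (fib (Suc n)))"
    by (simp add: algebra_simps)
  also have "\<dots> = - ((1 - phi) ^ n * (2 - phi))" using 3 by (simp add: algebra_simps)
  also have "2 - phi = (1 - phi)\<^sup>2" using phi_squared by (simp add: power2_eq_square algebra_simps)
  finally show ?case by (simp add: power_add[symmetric])
qed

lemma abs_fib_times_phi_minus_fib_Suc: "\<bar>real (fib k) * phi - real (fib (Suc k))\<bar> = (phi - 1) ^ k"
proof -
  have "\<bar>1 - phi\<bar> = phi - 1" using phi_bounds by simp
  then show ?thesis unfolding fib_times_phi_minus_fib_Suc by (simp add: power_abs)
qed

lemma fib_pair_basis:
  "\<exists>a b::int. y = a * int (fib (Suc i)) + b * int (fib i)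
              \<and> q = a * int (fib (Suc (Suc i))) + b * int (fib (Suc i))"
proof (induction i arbitrary: y q)
  case 0
  show ?case by (rule exI[of _ y], rule exI[of _ "q - y"]) simp
next
  case (Suc i)
  then obtain a b where "y = a * int (fib (Suc i)) + b * int (fib i)"
      "q = a * int (fib (Suc (Suc i))) + b * int (fib (Suc i))"
    by blast
  then show ?case by (intro exI[of _ b] exI[of _ "a - b"]) (simp add: algebra_simps)
qed

lemma lattice_point_off_line:
  fixes a b :: int and c :: real and u v :: nat
  assumes c: "0 < c" "c < 1"
    and between: "0 < a * int u + b * int v" "a * int u + b * int v < int u + int v"
    and "(a, b) \<noteq> (1, 0)"
  shows "c < \<bar>of_int b - of_int a * c\<bar>"
proof -
  consider "a = 0" | "b = 0" "a \<noteq> 0" | "a > 0" "b > 0" | "a < 0" "b < 0" | "a > 0" "b < 0"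
    | "a < 0" "b > 0"
    by linarith
  then show ?thesis
  proof cases
    case 1
    then have "b \<ge> 1" using between by (simp add: zero_less_mult_iff)
    then show ?thesis using 1 c by simp
  next
    case 2
    then have "a \<ge> 2" using between assms(5) by (simp add: zero_less_mult_iff)
    then have "2 * c \<le> of_int a * c" using c by (intro mult_right_mono) auto
    then show ?thesis using 2 c by simp
  next
    case 3
    then have "int u \<le> a * int u" "int v \<le> b * int v" by (simp_all add: mult_le_cancel_right1)
    then show ?thesis using between by linarith
  next
    case 4
    then have "a * int u \<le> 0" "b * int v \<le> 0" by (simp_all add: mult_le_0_iff)
    then show ?thesis using between by linarith
  next
    case 5
    then have "c \<le> of_int a * c" "of_int b \<le> (-1::real)" using c by (simp_all add: mult_le_cancel_right1)
    then show ?thesis using c by linarith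
  next
    case 6
    then have "of_int a \<le> (-1::real)" "(1::real) \<le> of_int b" by simp_all
    moreover from this(1) have "of_int a * c \<le> (-1) * c" using c by (intro mult_right_mono) auto
    ultimately show ?thesis using c by linarith
  qed
qed

text \<open>Writing \<open>(y, q)\<close> in the basis of \<open>fib_pair_basis\<close>, the error \<open>y\<phi> - q\<close> is \<open>(1 - \<phi>)\<^sup>i\<close> times the vertical
  distance of the coefficient vector from the line of slope \<open>\<phi> - 1\<close>.\<close>
lemma fib_best_approximation:
  fixes y :: nat and q :: int
  assumes "0 < y" "y < fib (Suc (Suc i))" "(y, q) \<noteq> (fib (Suc i), int (fib (Suc (Suc i))))"
  shows "(phi - 1) ^ Suc i < \<bar>real y * phi - of_int q\<bar>"
proof -
  obtain a b where ab: "int y = a * int (fib (Suc i)) + b * int (fib i)"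
    "q = a * int (fib (Suc (Suc i))) + b * int (fib (Suc i))"
    using fib_pair_basis by blast
  have "real y * phi - of_int q = of_int a * (real (fib (Suc i)) * phi - real (fib (Suc (Suc i))))
        + of_int b * (real (fib i) * phi - real (fib (Suc i)))"
    using arg_cong[OF ab(1), of real_of_int] arg_cong[OF ab(2), of real_of_int]
    by (simp add: algebra_simps)
  also have "\<dots> = of_int a * (- ((1 - phi) ^ Suc i)) + of_int b * (- ((1 - phi) ^ i))"
    by (simp only: fib_times_phi_minus_fib_Suc)
  also have "\<dots> = - ((1 - phi) ^ i * (of_int b - of_int a * (phi - 1)))"
    by (simp add: algebra_simps)
  finally have error: "\<bar>real y * phi - of_int q\<bar> = (phi - 1) ^ i * \<bar>of_int b - of_int a * (phi - 1)\<bar>"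
    using phi_bounds by (simp add: abs_mult power_abs)
  have "(a, b) \<noteq> (1, 0)" using ab assms(3) by auto
  then have "phi - 1 < \<bar>of_int b - of_int a * (phi - 1)\<bar>"
    using lattice_point_off_line[of "phi - 1" a "fib (Suc i)" b "fib i"] ab(1) assms(1,2) phi_bounds
    by simp
  moreover have "0 < (phi - 1) ^ i" using phi_bounds by simp
  ultimately show ?thesis unfolding error by simp
qed

lemma times_phi_not_Ints:
  assumes "1 \<le> x"
  shows "real x * phi \<notin> \<int>"
proof
  assume "real x * phi \<in> \<int>"
  then obtain q where q: "real x * phi = of_int q" by (auto elim: Ints_cases)
  have "x < fib (Suc (Suc x))" using fib_ge_self[of "Suc x"] by simp
  moreover have "fib (Suc (Suc x)) \<le> fib (Suc (Suc (Suc x)))" by (rule fib_Suc_mono)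
  ultimately have "(phi - 1) ^ Suc (Suc x) < \<bar>real x * phi - of_int q\<bar>"
    using assms by (intro fib_best_approximation) auto
  moreover have "0 < (phi - 1) ^ Suc (Suc x)" using phi_bounds by simp
  ultimately show False using q by simp
qed

section \<open>The Beatty sequences of \<open>\<phi>\<close> and \<open>\<phi>\<^sup>2\<close>\<close>

lemma frac_times_phi_pos: "1 \<le> x \<Longrightarrow> 0 < frac (real x * phi)"
  using times_phi_not_Ints by simp

lemma frac_times_phi_neq: "frac (real x * phi) \<noteq> 2 - phi"
proof
  assume "frac (real x * phi) = 2 - phi"
  then have "real (x + 1) * phi = of_int (\<lfloor>real x * phi\<rfloor> + 2)"
    by (simp add: frac_def algebra_simps)
  then show False using times_phi_not_Ints[of "x + 1"] by simp
qed

lemma upper_Wythoff_iff: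
  assumes "1 \<le> x"
  shows "(\<exists>k::nat. k \<ge> 1 \<and> int x = \<lfloor>phi\<^sup>2 * real k\<rfloor>) \<longleftrightarrow> frac (real x * phi) < 2 - phi"
proof
  assume "\<exists>k::nat. k \<ge> 1 \<and> int x = \<lfloor>phi\<^sup>2 * real k\<rfloor>"
  then obtain k :: nat where k: "int x = \<lfloor>phi\<^sup>2 * real k\<rfloor>" by blast
  have bounds: "real x \<le> (phi + 1) * real k" "(phi + 1) * real k < real x + 1"
    using floor_eq_iff[THEN iffD1, OF k[symmetric]] phi_squared by auto
  have "(phi + 1) * real k * (2 - phi) = (phi + 1) * (2 - phi) * real k"
    by (simp only: ac_simps)
  then have "(phi + 1) * real k * (2 - phi) = real k" by (simp add: phi_plus_1_times_2_minus_phi)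
  moreover have "0 < 2 - phi" using phi_bounds by simp
  ultimately have "real x * (2 - phi) \<le> real k" "real k < (real x + 1) * (2 - phi)"
    using bounds by (metis mult_right_mono less_imp_le, metis mult_strict_right_mono)
  moreover have "2 * int x - int k \<le> \<lfloor>real x * phi\<rfloor>"
    unfolding le_floor_iff using calculation(1) by (simp add: algebra_simps)
  ultimately show "frac (real x * phi) < 2 - phi" unfolding frac_def by (simp add: algebra_simps)
next
  assume small: "frac (real x * phi) < 2 - phi"
  define p where "p = \<lfloor>real x * phi\<rfloor>"
  have frac_x: "frac (real x * phi) = real x * phi - p" unfolding frac_def p_def ..
  have "phi\<^sup>2 * of_int (2 * int x - p) = real x + frac (real x * phi) * (phi + 1)"
    unfolding frac_x by (simp add: power2_eq_square phi_mult_phi_mult algebra_simps)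
  moreover have "frac (real x * phi) * (phi + 1) < 1"
    using mult_strict_right_mono[OF small, of "phi + 1"] phi_plus_1_times_2_minus_phi phi_bounds
    by (simp add: mult.commute)
  moreover have "0 \<le> frac (real x * phi) * (phi + 1)" using phi_bounds by simp
  ultimately have "\<lfloor>phi\<^sup>2 * of_int (2 * int x - p)\<rfloor> = int x"
    and "0 < phi\<^sup>2 * of_int (2 * int x - p)"
    using assms by (auto intro!: floor_unique)
  moreover from this(2) have "0 < 2 * int x - p" by (simp add: zero_less_mult_iff)
  ultimately show "\<exists>k::nat. k \<ge> 1 \<and> int x = \<lfloor>phi\<^sup>2 * real k\<rfloor>"
    by (intro exI[of _ "nat (2 * int x - p)"]) auto
qed

lemma lower_Wythoff_iff:
  assumes "1 \<le> x"
  shows "(\<exists>k::nat. k \<ge> 1 \<and> int x = \<lfloor>phi * real k\<rfloor>) \<longleftrightarrow> 2 - phi < frac (real x * phi)"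
proof
  assume "\<exists>k::nat. k \<ge> 1 \<and> int x = \<lfloor>phi * real k\<rfloor>"
  then obtain k :: nat where k: "int x = \<lfloor>phi * real k\<rfloor>" by blast
  have bounds: "real x \<le> phi * real k" "phi * real k < real x + 1"
    using floor_eq_iff[THEN iffD1, OF k[symmetric]] by auto
  have "phi * real k * (phi - 1) = phi * (phi - 1) * real k"
    by (simp only: ac_simps)
  then have "phi * real k * (phi - 1) = real k" by (simp add: phi_times_phi_minus_1)
  moreover have "0 < phi - 1" using phi_bounds by simp
  ultimately have lower: "real x * (phi - 1) \<le> real k" and upper: "real k < (real x + 1) * (phi - 1)"
    using bounds by (metis mult_right_mono less_imp_le, metis mult_strict_right_mono)
  define p where "p = \<lfloor>real x * phi\<rfloor>"
  have frac_x: "frac (real x * phi) = real x * phi - p" unfolding frac_def p_def ..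
  have "frac (real x * phi) \<le> of_int (int k - p + int x)"
    using lower frac_x by (simp add: algebra_simps)
  then have "1 \<le> int k - p + int x" using frac_times_phi_pos[OF assms] by linarith
  then show "2 - phi < frac (real x * phi)" using upper frac_x by (simp add: algebra_simps)
next
  assume large: "2 - phi < frac (real x * phi)"
  define p where "p = \<lfloor>real x * phi\<rfloor>"
  have frac_x: "frac (real x * phi) = real x * phi - p" unfolding frac_def p_def ..
  have "phi * of_int (p - int x + 1) = real x + phi * (1 - frac (real x * phi))"
    unfolding frac_x by (simp add: phi_mult_phi_mult algebra_simps)
  moreover have "phi * (1 - frac (real x * phi)) < 1"
    using mult_strict_left_mono[of "1 - frac (real x * phi)" "phi - 1" phi] large phi_bounds
      phi_times_phi_minus_1
    by simp
  moreover have "0 \<le> phi * (1 - frac (real x * phi))" using phi_bounds frac_lt_1[of "real x * phi"] by simp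
  ultimately have "\<lfloor>phi * of_int (p - int x + 1)\<rfloor> = int x"
    and "0 < phi * of_int (p - int x + 1)"
    using assms by (auto intro!: floor_unique)
  moreover from this(2) have "0 < p - int x + 1" using phi_bounds by (simp add: zero_less_mult_iff)
  ultimately show "\<exists>k::nat. k \<ge> 1 \<and> int x = \<lfloor>phi * real k\<rfloor>"
    by (intro exI[of _ "nat (p - int x + 1)"]) auto
qed

lemma frac_Suc_times_phi:
  assumes "2 - phi < frac (real n * phi)"
  shows "frac (real (n + 1) * phi) = frac (real n * phi) + phi - 2"
proof -
  have eq: "real (n + 1) * phi = of_int (\<lfloor>real n * phi\<rfloor> + 2) + (frac (real n * phi) + phi - 2)"
    by (simp add: frac_def algebra_simps)
  have "frac (real n * phi) + phi - 2 \<in> {0..<1}"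
    using assms frac_lt_1[of "real n * phi"] phi_bounds by auto
  then show ?thesis unfolding eq by (simp only: frac_add_of_int_left frac_eq_id)
qed

lemma frac_floor_times_phi:
  assumes "1 \<le> m" "int n = \<lfloor>real m * phi\<rfloor>"
  shows "frac (real n * phi) = 1 - (phi - 1) * frac (real m * phi)"
proof -
  define \<theta> where "\<theta> = frac (real m * phi)"
  have n: "real n = real m * phi - \<theta>"
    unfolding \<theta>_def frac_def using arg_cong[OF assms(2), of real_of_int] by simp
  have "real n * phi = real m * (phi * phi) - \<theta> * phi" unfolding n by (simp add: algebra_simps)
  also have "\<dots> = of_int (int m + int n - 1) + (1 - (phi - 1) * \<theta>)"
    using phi_squared n by (simp add: power2_eq_square algebra_simps)
  finally have eq: "real n * phi = of_int (int m + int n - 1) + (1 - (phi - 1) * \<theta>)" .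
  have "0 < \<theta>" "\<theta> < 1" unfolding \<theta>_def using frac_times_phi_pos[OF assms(1)] frac_lt_1 by auto
  then have "1 - (phi - 1) * \<theta> \<in> {0..<1}"
    using phi_bounds mult_strict_mono[of "phi - 1" 1 \<theta> 1] by auto
  then show ?thesis unfolding eq \<theta>_def[symmetric] by (simp only: frac_add_of_int_left frac_eq_id)
qed

lemma frac_floor_times_phi_gt_iff:
  assumes "1 \<le> m" "int n = \<lfloor>real m * phi\<rfloor>"
  shows "4 - 2 * phi < frac (real n * phi) \<longleftrightarrow> frac (real m * phi) < 2 - phi"
proof -
  have "4 - 2 * phi = 1 - (phi - 1) * (2 - phi)"
    using phi_squared by (simp add: power2_eq_square algebra_simps)
  moreover have "0 < phi - 1" using phi_bounds by simp
  ultimately show ?thesis unfolding frac_floor_times_phi[OF assms] by simp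
qed

lemma floor_phi_floor_phi_squared_iff:
  assumes "1 \<le> n"
  shows "(\<exists>k::nat. k \<ge> 1 \<and> int n = \<lfloor>phi * of_int \<lfloor>phi\<^sup>2 * real k\<rfloor>\<rfloor>)
    \<longleftrightarrow> 4 - 2 * phi < frac (real n * phi)"
proof
  assume "\<exists>k::nat. k \<ge> 1 \<and> int n = \<lfloor>phi * of_int \<lfloor>phi\<^sup>2 * real k\<rfloor>\<rfloor>"
  then obtain k :: nat where k: "k \<ge> 1" "int n = \<lfloor>phi * of_int \<lfloor>phi\<^sup>2 * real k\<rfloor>\<rfloor>" by blast
  have "1 * 1 \<le> phi\<^sup>2 * real k" using k(1) phi_bounds phi_squared by (intro mult_mono) auto
  then have "1 \<le> \<lfloor>phi\<^sup>2 * real k\<rfloor>" by (simp add: le_floor_iff)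
  then obtain m :: nat where m: "int m = \<lfloor>phi\<^sup>2 * real k\<rfloor>" "1 \<le> m"
    by (metis zero_le_imp_eq_int int_one_le_iff_zero_less of_nat_le_iff of_nat_1 order.trans zero_le_one)
  have "frac (real m * phi) < 2 - phi" using upper_Wythoff_iff[OF m(2)] k(1) m(1) by blast
  moreover have "int n = \<lfloor>real m * phi\<rfloor>"
    using k(2) arg_cong[OF m(1), of real_of_int] by (simp add: mult.commute)
  ultimately show "4 - 2 * phi < frac (real n * phi)" using frac_floor_times_phi_gt_iff m(2) by blast
next
  assume large: "4 - 2 * phi < frac (real n * phi)"
  moreover have "2 - phi < 4 - 2 * phi" using phi_bounds by simp
  ultimately have "2 - phi < frac (real n * phi)" by linarith
  then obtain m :: nat where m: "m \<ge> 1" "int n = \<lfloor>real m * phi\<rfloor>"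
    using lower_Wythoff_iff[OF assms] by (auto simp: mult.commute)
  then have "frac (real m * phi) < 2 - phi" using large frac_floor_times_phi_gt_iff by blast
  then obtain k :: nat where k: "k \<ge> 1" "int m = \<lfloor>phi\<^sup>2 * real k\<rfloor>"
    using upper_Wythoff_iff[OF m(1)] by blast
  have "real m = of_int \<lfloor>phi\<^sup>2 * real k\<rfloor>" using arg_cong[OF k(2), of real_of_int] by simp
  then show "\<exists>k::nat. k \<ge> 1 \<and> int n = \<lfloor>phi * of_int \<lfloor>phi\<^sup>2 * real k\<rfloor>\<rfloor>"
    using k(1) m(2) by (auto simp: mult.commute)
qed

section \<open>Shifting by Fibonacci numbers\<close>

text \<open>Adding \<open>F\<^sub>i\<^sub>+\<^sub>1\<close> to \<open>x\<close> moves \<open>frac (x\<phi>)\<close> by \<open>s = F\<^sub>i\<^sub>+\<^sub>1\<phi> - F\<^sub>i\<^sub>+\<^sub>2\<close>. By the best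
  approximation property, \<open>x\<phi>\<close> is farther than \<open>\<bar>s\<bar>\<close> from the integers and \<open>(x + 1)\<phi>\<close> is
  farther than \<open>\<bar>s\<bar>\<close> from \<open>\<lfloor>x\<phi>\<rfloor> + 2\<close>, unless \<open>x + 1 = F\<^sub>i\<^sub>+\<^sub>1\<close>, where the shift is exactly
  \<open>frac (x\<phi>) - (2 - \<phi>)\<close>. Either way the shift cannot carry \<open>frac (x\<phi>)\<close> across \<open>2 - \<phi>\<close>.\<close>
lemma frac_add_fib_times_phi_less_iff:
  assumes "0 < x" "x + 1 < fib (Suc (Suc i))" "x \<noteq> fib (Suc i)"
  shows "frac (real (x + fib (Suc i)) * phi) < 2 - phi \<longleftrightarrow> frac (real x * phi) < 2 - phi"
proof -
  define p where "p = \<lfloor>real x * phi\<rfloor>"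
  define \<theta> where "\<theta> = frac (real x * phi)"
  define s where "s = real (fib (Suc i)) * phi - real (fib (Suc (Suc i)))"
  have \<theta>: "\<theta> = real x * phi - of_int p" "0 \<le> \<theta>" "\<theta> < 1"
    unfolding \<theta>_def p_def frac_def by linarith+
  have s: "\<bar>s\<bar> = (phi - 1) ^ Suc i" unfolding s_def by (rule abs_fib_times_phi_minus_fib_Suc)
  have "\<bar>s\<bar> < \<theta>" using fib_best_approximation[of x i p] assms \<theta> s by simp
  moreover have "\<bar>s\<bar> < 1 - \<theta>" using fib_best_approximation[of x i "p + 1"] assms \<theta> s by simp
  ultimately have "\<theta> + s \<in> {0..<1}" by auto
  moreover have "real (x + fib (Suc i)) * phi = of_int (p + int (fib (Suc (Suc i)))) + (\<theta> + s)"
    by (simp add: \<theta>(1) s_def algebra_simps)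
  ultimately have shift: "frac (real (x + fib (Suc i)) * phi) = \<theta> + s"
    by (simp only: frac_add_of_int_left frac_eq_id)
  have "\<bar>s\<bar> < \<bar>\<theta> - (2 - phi)\<bar> \<or> \<theta> - (2 - phi) = s"
  proof (cases "(x + 1, p + 2) = (fib (Suc i), int (fib (Suc (Suc i))))")
    case True
    then have convergent: "real x + 1 = real (fib (Suc i))" "of_int p + 2 = real (fib (Suc (Suc i)))"
      by (auto simp del: fib2)
    have "\<theta> - (2 - phi) = (real x + 1) * phi - (of_int p + 2)" by (simp add: \<theta>(1) algebra_simps)
    also have "\<dots> = s" by (simp only: convergent s_def)
    finally show ?thesis by simp
  next
    case False
    have "\<bar>real (x + 1) * phi - of_int (p + 2)\<bar> = \<bar>\<theta> - (2 - phi)\<bar>" by (simp add: \<theta>(1) algebra_simps)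
    then show ?thesis using fib_best_approximation[of "x + 1" i "p + 2"] assms False s by simp
  qed
  moreover have "s \<noteq> 0" using s phi_bounds by auto
  ultimately show ?thesis unfolding shift \<theta>_def[symmetric] by (auto simp: abs_if split: if_split_asm)
qed

lemma frac_fib_plus_1_times_phi_gt:
  assumes "3 \<le> j"
  shows "2 - phi < frac (real (fib j + 1) * phi)"
proof -
  define s where "s = real (fib j) * phi - real (fib (Suc j))"
  have s: "- (2 * phi - 3) < s \<and> \<bar>s\<bar> \<le> 2 * phi - 3"
  proof (cases "j = 3")
    case True
    then have "s = 2 * phi - 3" unfolding s_def by (simp add: numeral_eq_Suc)
    then show ?thesis using phi_bounds by simp
  next
    case False
    then have "4 \<le> j" using assms by simp
    then have "(phi - 1) ^ j \<le> (phi - 1) ^ 4" using phi_bounds by (intro power_decreasing) auto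
    also have "\<dots> = (phi - 1) ^ 3 * (phi - 1)" by (simp add: numeral_eq_Suc)
    also have "\<dots> < (phi - 1) ^ 3" using phi_bounds by (simp add: phi_minus_1_cube)
    finally show ?thesis
      using abs_fib_times_phi_minus_fib_Suc[of j] phi_minus_1_cube unfolding s_def by simp
  qed
  then have "phi - 1 + s \<in> {0..<1}" using phi_bounds by auto
  moreover have "real (fib j + 1) * phi = of_int (int (fib (Suc j)) + 1) + (phi - 1 + s)"
    by (simp add: s_def algebra_simps)
  ultimately have "frac (real (fib j + 1) * phi) = phi - 1 + s"
    by (simp only: frac_add_of_int_left frac_eq_id)
  then show ?thesis using s by simp
qed

lemma frac_two_times_phi: "frac (2 * phi) = 2 * phi - 3"
  using phi_bounds by (simp add: frac_unique_iff)

section \<open>The sequence \<open>a\<close>\<close>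

declare a.simps [simp del]

lemma fibidx_eqI:
  assumes "2 \<le> j" "fib j < n" "n \<le> fib (j + 1)"
  shows "fibidx n = j"
proof -
  have "2 \<le> n" using assms fib_neq_0_nat[of j] by simp
  then show ?thesis using fibidx_spec fibidx_unique assms by blast
qed

lemma a_fib_step:
  assumes "2 \<le> j" "fib j < n" "n \<le> fib (j + 1)"
  shows "a n = int (fib (j + 1)) - a (n - fib j)"
proof -
  have "2 \<le> n" using assms fib_neq_0_nat[of j] by simp
  then show ?thesis using fibidx_eqI[OF assms] by (subst a.simps) simp
qed

lemma a_0: "a 0 = 0"
  by (subst a.simps) simp

lemma a_1: "a 1 = 1"
  by (subst a.simps) simp

lemma a_2: "a 2 = 1"
  using a_fib_step[of 2 2] a_1 by (simp add: numeral_eq_Suc)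

lemma a_bounds:
  assumes "1 \<le> n" "n \<le> fib k"
  shows "1 \<le> a n \<and> a n \<le> int (fib k)"
  using assms
proof (induction n arbitrary: k rule: less_induct)
  case (less n)
  show ?case
  proof (cases "n = 1")
    case True
    then show ?thesis using less.prems a_1 by simp
  next
    case False
    then have "2 \<le> n" using less.prems by simp
    define j where "j = fibidx n"
    have j: "2 \<le> j" "fib j < n" "n \<le> fib (j + 1)" using fibidx_spec[OF \<open>2 \<le> n\<close>] j_def by auto
    have fib_Suc_j: "fib (j + 1) = fib j + fib (j - 1)"
      using fib_Suc_eq_add_fib_pred j(1) by simp
    define m where "m = n - fib j"
    have "1 \<le> m" "m < n" "m \<le> fib (j - 1)"
      using j fib_Suc_j fib_neq_0_nat[of j] unfolding m_def by auto
    then have "1 \<le> a m" "a m \<le> int (fib (j - 1))" using less.IH by blast+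
    moreover have "a n = int (fib (j + 1)) - a m" unfolding m_def using j by (rule a_fib_step)
    moreover have "j + 1 \<le> k" using j(2) less.prems(2) fib_mono[of k j] by (cases "k \<le> j") auto
    then have "fib (j + 1) \<le> fib k" by (rule fib_mono)
    moreover have "1 \<le> fib j" using j(1) fib_neq_0_nat[of j] by simp
    ultimately show ?thesis using fib_Suc_j by linarith
  qed
qed

lemma a_eq_a_Suc_iff_reduced:
  assumes "2 \<le> j" "fib j < n" "n < fib (j + 1)"
  shows "a n = a (n + 1) \<longleftrightarrow> a (n - fib j) = a (n - fib j + 1)"
proof -
  have "a n = int (fib (j + 1)) - a (n - fib j)" using assms by (intro a_fib_step) auto
  moreover have "a (n + 1) = int (fib (j + 1)) - a (n + 1 - fib j)"
    using assms by (intro a_fib_step) auto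
  moreover have "n + 1 - fib j = n - fib j + 1" using assms(2) by simp
  ultimately show ?thesis by simp
qed

lemma a_fib_neq_a_Suc:
  assumes "2 \<le> j"
  shows "a (fib (j + 1)) \<noteq> a (fib (j + 1) + 1)"
proof -
  have fib_Suc_j: "fib (j + 1) = fib j + fib (j - 1)"
    using fib_Suc_eq_add_fib_pred assms by simp
  have pos: "1 \<le> fib j" "1 \<le> fib (j - 1)" using assms fib_neq_0_nat[of j] fib_neq_0_nat[of "j - 1"] by auto
  have "a (fib (j + 1)) = int (fib (j + 1)) - a (fib (j + 1) - fib j)"
    using assms fib_Suc_j pos by (intro a_fib_step) auto
  moreover have "1 \<le> a (fib (j + 1) - fib j)" using a_bounds[of "fib (j + 1) - fib j" "j + 1"] fib_Suc_j pos by simp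
  moreover have "a (fib (j + 1) + 1) = int (fib (j + 2)) - a 1"
    using a_fib_step[of "j + 1" "fib (j + 1) + 1"] assms pos fib_plus_2[of j] by simp
  ultimately show ?thesis using a_1 fib_plus_2[of j] pos by simp
qed

lemma frac_Suc_times_phi_less_iff_reduced:
  assumes "2 \<le> j" "fib j < n" "n < fib (j + 1)"
  shows "frac (real (n + 1) * phi) < 2 - phi \<longleftrightarrow> frac (real (n - fib j + 1) * phi) < 2 - phi"
proof -
  obtain i where i: "j = Suc i" using assms(1) by (cases j) auto
  define x where "x = n - fib j + 1"
  have fib_Suc_j: "fib (Suc j) = fib j + fib i" using fib2[of i] i by simp
  have x: "2 \<le> x" "x \<le> fib i" using assms fib_Suc_j unfolding x_def by auto
  have "fib i \<le> fib j" using i by (simp add: fib_Suc_mono)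
  then have "x + 1 < fib (Suc (Suc i))" using x fib_Suc_j i by simp
  moreover have "x \<noteq> fib (Suc i)"
  proof
    assume x_eq: "x = fib (Suc i)"
    then obtain m where m: "i = Suc m" using x by (cases i) auto
    then have "fib m = 0" using x x_eq by simp
    then have "m = 0" using fib_neq_0_nat[of m] by auto
    then show False using x x_eq m by simp
  qed
  ultimately have "frac (real (x + fib (Suc i)) * phi) < 2 - phi \<longleftrightarrow> frac (real x * phi) < 2 - phi"
    using x by (intro frac_add_fib_times_phi_less_iff) auto
  moreover have "x + fib (Suc i) = n + 1" using assms(2) i unfolding x_def by simp
  ultimately show ?thesis unfolding x_def by metis
qed

lemma a_eq_a_Suc_iff_frac: "a n = a (n + 1) \<longleftrightarrow> frac (real (n + 1) * phi) < 2 - phi"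
proof (induction n rule: less_induct)
  case (less n)
  consider "n = 0" | "n = 1" | "2 \<le> n" by linarith
  then show ?case
  proof cases
    case 1
    have "frac phi = phi - 1" using phi_bounds by (simp add: frac_unique_iff)
    then show ?thesis using 1 a_0 a_1 phi_bounds by simp
  next
    case 2
    then show ?thesis using a_1 a_2 frac_two_times_phi phi_bounds by (simp add: numeral_2_eq_2)
  next
    case 3
    define j where "j = fibidx n"
    have j: "2 \<le> j" "fib j < n" "n \<le> fib (j + 1)" using fibidx_spec[OF 3] j_def by auto
    show ?thesis
    proof (cases "n = fib (j + 1)")
      case True
      then show ?thesis
        using a_fib_neq_a_Suc[OF j(1)] frac_fib_plus_1_times_phi_gt[of "j + 1"] j(1) by simp
    next
      case False
      then have "n < fib (j + 1)" using j by simp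
      moreover have "n - fib j < n" using j fib_neq_0_nat[of j] by simp
      ultimately show ?thesis
        using less.IH a_eq_a_Suc_iff_reduced[OF j(1,2)] frac_Suc_times_phi_less_iff_reduced[OF j(1,2)]
        by simp
    qed
  qed
qed

lemma a_isolated_iff_frac:
  assumes "1 \<le> n"
  shows "a n \<notin> {a (n - 1), a (n + 1)} \<longleftrightarrow> 4 - 2 * phi < frac (real n * phi)"
proof -
  have "a (n - 1) = a n \<longleftrightarrow> frac (real n * phi) < 2 - phi"
    using a_eq_a_Suc_iff_frac[of "n - 1"] assms by simp
  then have "a n \<notin> {a (n - 1), a (n + 1)}
      \<longleftrightarrow> 2 - phi < frac (real n * phi) \<and> 2 - phi < frac (real (n + 1) * phi)"
    using a_eq_a_Suc_iff_frac[of n] frac_times_phi_neq[of n] frac_times_phi_neq[of "n + 1"] by auto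
  also have "\<dots> \<longleftrightarrow> 4 - 2 * phi < frac (real n * phi)"
    using frac_Suc_times_phi[of n] phi_bounds by auto
  finally show ?thesis .
qed

lemma floor_phi_times_plus_inverse_phi: "\<lfloor>phi * real k + 1 / phi\<rfloor> = \<lfloor>phi * real (k + 1)\<rfloor> - 1"
proof -
  have "1 / phi = phi - 1" using phi_times_phi_minus_1 phi_bounds by (simp add: field_simps)
  then have "phi * real k + 1 / phi = phi * real (k + 1) - 1" by (simp add: algebra_simps)
  then show ?thesis by simp
qed

lemma a_eq_a_Suc_iff: "a n = a (n + 1) \<longleftrightarrow> (\<exists>k::nat. k \<ge> 1 \<and> int n = \<lfloor>phi\<^sup>2 * real k\<rfloor> - 1)"
proof -
  have "(\<exists>k::nat. k \<ge> 1 \<and> int n = \<lfloor>phi\<^sup>2 * real k\<rfloor> - 1)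
      \<longleftrightarrow> (\<exists>k::nat. k \<ge> 1 \<and> int (n + 1) = \<lfloor>phi\<^sup>2 * real k\<rfloor>)"
    by auto
  then show ?thesis using a_eq_a_Suc_iff_frac[of n] upper_Wythoff_iff[of "n + 1"] by simp
qed

lemma a_neq_a_Suc_iff: "a n \<noteq> a (n + 1) \<longleftrightarrow> (\<exists>k::nat. int n = \<lfloor>phi * real k + 1 / phi\<rfloor>)"
proof -
  have "a n \<noteq> a (n + 1) \<longleftrightarrow> (\<exists>k::nat. k \<ge> 1 \<and> int (n + 1) = \<lfloor>phi * real k\<rfloor>)"
    using a_eq_a_Suc_iff_frac[of n] frac_times_phi_neq[of "n + 1"] lower_Wythoff_iff[of "n + 1"]
    by auto
  also have "\<dots> \<longleftrightarrow> (\<exists>k::nat. int n = \<lfloor>phi * real k + 1 / phi\<rfloor>)"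
  proof
    assume "\<exists>k::nat. k \<ge> 1 \<and> int (n + 1) = \<lfloor>phi * real k\<rfloor>"
    then obtain k :: nat where "k \<ge> 1" "int (n + 1) = \<lfloor>phi * real k\<rfloor>" by blast
    then have "int n = \<lfloor>phi * real (k - 1) + 1 / phi\<rfloor>"
      using floor_phi_times_plus_inverse_phi[of "k - 1"] by simp
    then show "\<exists>k::nat. int n = \<lfloor>phi * real k + 1 / phi\<rfloor>" ..
  next
    assume "\<exists>k::nat. int n = \<lfloor>phi * real k + 1 / phi\<rfloor>"
    then obtain k :: nat where "int (n + 1) = \<lfloor>phi * real (k + 1)\<rfloor>"
      unfolding floor_phi_times_plus_inverse_phi by auto
    then show "\<exists>k::nat. k \<ge> 1 \<and> int (n + 1) = \<lfloor>phi * real k\<rfloor>" by (intro exI[of _ "k + 1"]) simp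
  qed
  finally show ?thesis .
qed

lemma a_isolated_iff:
  assumes "1 \<le> n"
  shows "a n \<notin> {a (n - 1), a (n + 1)}
    \<longleftrightarrow> (\<exists>k::nat. k \<ge> 1 \<and> int n = \<lfloor>phi * of_int \<lfloor>phi\<^sup>2 * real k\<rfloor>\<rfloor>)"
  using a_isolated_iff_frac[OF assms] floor_phi_floor_phi_squared_iff[OF assms] by simp

theorem proposition9:
  shows "(\<forall>n::nat. a n = a (n + 1) \<longleftrightarrow>
            (\<exists>k::nat. k \<ge> 1 \<and> int n = \<lfloor>phi ^ 2 * real k\<rfloor> - 1))
       \<and> (\<forall>n::nat. a n \<noteq> a (n + 1) \<longleftrightarrow>
            (\<exists>k::nat. int n = \<lfloor>phi * real k + 1 / phi\<rfloor>))
       \<and> (\<forall>n::nat. n \<ge> 1 \<longrightarrow>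
            (a n \<notin> {a (n - 1), a (n + 1)} \<longleftrightarrow>
            (\<exists>k::nat. k \<ge> 1 \<and> int n = \<lfloor>phi * real_of_int \<lfloor>phi ^ 2 * real k\<rfloor>\<rfloor>)))"
  using a_eq_a_Suc_iff a_neq_a_Suc_iff a_isolated_iff by blast

end
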